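(* There exists an absolute constant $c > 0$ such that for every even $n \in \mathbb{N}$ and every integer $m \geqslant \sqrt{n}$, the number of sum-free subsets of $[n]$ of size $m$ is at least $2^{cn/m} \binom{n/2}{m}$.
   Context: $[n] = \{1,\ldots,n\}$. A set of integers is sum-free if it contains no $x,y,z$ (not necessarily distinct) with $x+y=z$. The paper writes the conclusion as $2^{\Omega(n/m)}\binom{n/2}{m}$, with $\Omega(\cdot)$ hiding an absolute constant. *)

theory Defs
  imports Complex_Main
begin

definition sum_free :: "nat set \<Rightarrow> bool" where
  "sum_free A \<longleftrightarrow> (\<forall>x\<in>A. \<forall>y\<in>A. \<forall>z\<in>A. x + y \<noteq> z)"

end

theory Submission
  imports Defs "HOL-Library.Set_Algebras"
begin

text \<open>Write \<open>n = 2*N\<close>. The \<open>m\<close>-subsets of the odd numbers together with the \<open>m\<close>-subsets of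
  \<open>{N<..2*N}\<close> containing \<open>2*N\<close> give \<open>(1 + m/N) * (N choose m)\<close> sum-free sets, enough when \<open>N/m\<close>
  is bounded. Otherwise let \<open>K = N div (8*m)\<close> and take at most \<open>K\<close> elements \<open>P\<close> from the
  interval of length \<open>4*K*K\<close> around \<open>N\<close> and the rest from the top interval outside \<open>P + P\<close>.
  Such sets are sum-free, and since typically far fewer than \<open>K\<close> elements fall into the middle
  interval, their number is at least half of \<open>(N + K*K) choose m \<ge> exp (K*K*m / (4*N)) * (N choose m)\<close>,
  where \<open>K*K*m / N\<close> is of order \<open>N/m\<close>.\<close>

definition sum_free_subsets :: "nat \<Rightarrow> nat \<Rightarrow> nat set set" where
  "sum_free_subsets n m = {A. A \<subseteq> {1..n} \<and> card A = m \<and> sum_free A}"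

lemma finite_sum_free_subsets: "finite (sum_free_subsets n m)"
  unfolding sum_free_subsets_def by (rule finite_subset[of _ "Pow {1..n}"]) auto

lemma card_le_card_sum_free_subsets:
  assumes "\<And>A. A \<in> F \<Longrightarrow> A \<subseteq> {1..n} \<and> card A = m \<and> sum_free A"
  shows "card F \<le> card (sum_free_subsets n m)"
  using assms by (intro card_mono finite_sum_free_subsets) (auto simp: sum_free_subsets_def)

lemma sum_free_odd: "A \<subseteq> {x. odd x} \<Longrightarrow> sum_free A"
  unfolding sum_free_def by (metis mem_Collect_eq odd_add subsetD)

lemma sum_free_upper_half: "A \<subseteq> {N<..2*N} \<Longrightarrow> sum_free A"
  unfolding sum_free_def by (metis add_less_mono greaterThanAtMost_iff mult_2 not_le subsetD)

lemma binomial_le_card_sum_free_subsets: "N choose m \<le> card (sum_free_subsets (2*N) m)"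
proof -
  let ?Odd = "(\<lambda>i. 2*i + 1) ` {..<N}"
  have "card ?Odd = N"
    by (subst card_image) (auto simp: inj_on_def)
  then have "N choose m = card {A. A \<subseteq> ?Odd \<and> card A = m}"
    by (simp add: n_subsets)
  also have "\<dots> \<le> card (sum_free_subsets (2*N) m)"
    by (rule card_le_card_sum_free_subsets) (auto intro!: sum_free_odd)
  finally show ?thesis .
qed

text \<open>The sets in the upper half containing \<open>2*N\<close> are sum-free and, containing an even number,
  disjoint from the sets of odd numbers.\<close>
lemma binomial_add_le_card_sum_free_subsets:
  assumes "1 \<le> m" "1 \<le> N"
  shows "(N choose m) + ((N - 1) choose (m - 1)) \<le> card (sum_free_subsets (2*N) m)"
proof -
  define Odd where "Odd = {A. A \<subseteq> (\<lambda>i. 2*i + 1) ` {..<N} \<and> card A = m}"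
  define Top where "Top = {A. A \<subseteq> {N<..2*N} \<and> card A = m \<and> 2*N \<in> A}"
  have sum_free_Odd: "sum_free A" if "A \<in> Odd" for A
    using that by (auto simp: Odd_def intro!: sum_free_odd)
  have card_Odd: "card Odd = N choose m"
    unfolding Odd_def by (subst n_subsets) (auto simp: card_image inj_on_def)
  have "Top = {A. A \<subseteq> {N<..2*N} \<and> card A = m} - {A. A \<subseteq> {N<..2*N} - {2*N} \<and> card A = m}"
    unfolding Top_def by auto
  also have "card \<dots> = (N choose m) - ((N - 1) choose m)"
    using assms by (subst card_Diff_subset) (auto simp: n_subsets)
  also have "\<dots> = (N - 1) choose (m - 1)"
    using assms by (cases N; cases m) auto
  finally have card_Top: "card Top = (N - 1) choose (m - 1)" .
  have "card Odd + card Top = card (Odd \<union> Top)"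
    by (rule card_Un_disjoint[symmetric]) (auto simp: Odd_def Top_def)
  also have "\<dots> \<le> card (sum_free_subsets (2*N) m)"
    by (rule card_le_card_sum_free_subsets)
      (auto simp: Odd_def Top_def intro: sum_free_Odd sum_free_upper_half)
  finally show ?thesis by (simp only: card_Odd card_Top)
qed

lemma card_set_plus_self_le: "finite P \<Longrightarrow> card (P + P) \<le> card P * card P"
  by (metis card_cartesian_product card_image_le finite_cartesian_product set_plus_image)

text \<open>Two elements above \<open>N - t\<close> add up to more than \<open>N + t\<close>, so a sum can only land in \<open>W\<close>;
  then both summands are below \<open>N + t\<close>, hence in \<open>P\<close>, and \<open>W\<close> avoids \<open>P + P\<close>.\<close>
lemma sum_free_Un_avoiding_sumset:
  fixes P W :: "nat set"
  assumes P: "P \<subseteq> {N - t<..N + t}" and W: "W \<subseteq> {N + t<..2*N}"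
    and avoid: "W \<inter> (P + P) = {}" and t: "3*t < N + 2"
  shows "sum_free (P \<union> W)"
  unfolding sum_free_def
proof (intro ballI notI)
  fix x y z assume xyz: "x \<in> P \<union> W" "y \<in> P \<union> W" "z \<in> P \<union> W" and sum: "x + y = z"
  have low: "N - t < a" if "a \<in> P \<union> W" for a
    using that P W by fastforce
  have "N + t < z" using low[OF xyz(1)] low[OF xyz(2)] sum t by linarith
  then have "z \<in> W" "z \<le> 2*N" using xyz(3) P W by auto
  then have "x \<in> P" "y \<in> P" using low[OF xyz(1)] low[OF xyz(2)] xyz(1,2) sum W by force+
  then have "z \<in> P + P" using sum by blast
  with \<open>z \<in> W\<close> avoid show False by blast
qed

lemma binomial_le_card_subsets_Diff:
  assumes "finite R" "finite F"
  shows "(card R - card F) choose k \<le> card {W. W \<subseteq> R - F \<and> card W = k}"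
proof -
  have "card R - card F \<le> card (R - F)"
    by (rule diff_card_le_card_Diff[OF assms(2)])
  then show ?thesis
    using assms by (simp add: n_subsets binomial_right_mono)
qed

text \<open>Choose \<open>j \<le> K\<close> elements \<open>P\<close> in the middle interval of length \<open>2*t\<close> and \<open>m - j\<close> elements
  of the top interval avoiding the at most \<open>K*K\<close> elements of \<open>P + P\<close>.\<close>
lemma sum_binomial_le_card_sum_free_subsets:
  assumes t: "3*t < N + 2"
  shows "(\<Sum>j | j \<le> m \<and> j \<le> K. (2*t choose j) * ((N - t - K*K) choose (m - j)))
    \<le> card (sum_free_subsets (2*N) m)"
proof -
  define S where "S = {N - t<..N + t}"
  define R where "R = {N + t<..2*N}"
  define J where "J = {j. j \<le> m \<and> j \<le> K}"
  define Ps where "Ps j = {P. P \<subseteq> S \<and> card P = j}" for j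
  define Ws where "Ws j P = {W. W \<subseteq> R - (P + P) \<and> card W = m - j}" for j P
  define X where "X = (SIGMA j:J. SIGMA P:Ps j. Ws j P)"
  have card_S: "card S = 2*t" and card_R: "card R = N - t"
    using t by (auto simp: S_def R_def)
  have fin: "finite J" "finite (Ps j)" "finite (Ws j P)" for j P
    by (auto simp: J_def Ps_def Ws_def S_def R_def)
  have "(\<Sum>j\<in>J. (2*t choose j) * ((N - t - K*K) choose (m - j)))
      = (\<Sum>j\<in>J. \<Sum>P\<in>Ps j. (N - t - K*K) choose (m - j))"
    using card_S by (simp add: Ps_def n_subsets S_def)
  also have "\<dots> \<le> (\<Sum>j\<in>J. \<Sum>P\<in>Ps j. card (Ws j P))"
  proof (intro sum_mono)
    fix j P assume "j \<in> J" "P \<in> Ps j"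
    then have "P \<subseteq> S" "card P \<le> K" by (auto simp: J_def Ps_def)
    then have "card (P + P) \<le> K*K" "finite (P + P)"
      using card_set_plus_self_le[of P] finite_subset[of P S]
      by (auto simp: S_def finite_set_plus intro: order_trans mult_mono)
    then have "N - t - K*K \<le> card R - card (P + P)" using card_R by linarith
    then show "(N - t - K*K) choose (m - j) \<le> card (Ws j P)"
      using binomial_le_card_subsets_Diff[of R "P + P" "m - j"] \<open>finite (P + P)\<close>
      by (auto simp: Ws_def R_def intro: order_trans binomial_right_mono)
  qed
  also have "\<dots> = card X"
    using fin by (simp add: X_def card_SigmaI)
  also have "\<dots> = card ((\<lambda>(j, P, W). P \<union> W) ` X)"
  proof (rule card_image[symmetric], rule inj_onI)
    fix a b assume "a \<in> X" "b \<in> X" and eq: "(\<lambda>(j, P, W). P \<union> W) a = (\<lambda>(j, P, W). P \<union> W) b"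
    obtain j P W j' P' W' where ab: "a = (j, P, W)" "b = (j', P', W')" by (cases a, cases b) auto
    have "P \<subseteq> S" "P' \<subseteq> S" "W \<subseteq> R" "W' \<subseteq> R" "card P = j" "card P' = j'"
      using \<open>a \<in> X\<close> \<open>b \<in> X\<close> by (auto simp: ab X_def Ps_def Ws_def)
    moreover have "S \<inter> R = {}" by (auto simp: S_def R_def)
    ultimately have "P = (P \<union> W) \<inter> S" "P' = (P' \<union> W') \<inter> S"
      "W = (P \<union> W) \<inter> R" "W' = (P' \<union> W') \<inter> R" "card P = j" "card P' = j'" by blast+
    then show "a = b" using eq by (simp add: ab)
  qed
  also have "\<dots> \<le> card (sum_free_subsets (2*N) m)"
  proof (rule card_le_card_sum_free_subsets, clarify)
    fix j P W assume "(j, P, W) \<in> X"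
    then have P: "P \<subseteq> S" "card P = j" "j \<le> m" and W: "W \<subseteq> R - (P + P)" "card W = m - j"
      by (auto simp: X_def J_def Ps_def Ws_def)
    have "finite P" "finite W"
      using P W by (auto simp: S_def R_def finite_subset)
    moreover have "P \<inter> W = {}"
      using P W by (force simp: S_def R_def)
    ultimately have "card (P \<union> W) = m" using P W by (simp add: card_Un_disjoint)
    moreover have "sum_free (P \<union> W)"
      using P W t by (intro sum_free_Un_avoiding_sumset) (auto simp: S_def R_def)
    moreover have "P \<union> W \<subseteq> {1..2*N}" using P W t by (auto simp: S_def R_def)
    ultimately show "P \<union> W \<subseteq> {1..2*N} \<and> card (P \<union> W) = m \<and> sum_free (P \<union> W)" by blast
  qed
  finally show ?thesis by (simp only: J_def)
qed

lemma vandermonde_mult_index: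
  assumes "1 \<le> m" "1 \<le> a"
  shows "(\<Sum>j\<le>m. j * ((a choose j) * (b choose (m - j)))) = a * ((a + b - 1) choose (m - 1))"
proof -
  obtain m' where m: "m = Suc m'"
    using assms by (metis Suc_le_D One_nat_def)
  have "(\<Sum>j\<le>m. j * ((a choose j) * (b choose (m - j))))
      = (\<Sum>i\<le>m'. Suc i * (a choose Suc i) * (b choose (m' - i)))"
    unfolding m by (subst sum.atMost_Suc_shift) (simp only: mult.assoc, simp)
  also have "\<dots> = (\<Sum>i\<le>m'. a * (((a - 1) choose i) * (b choose (m' - i))))"
    by (simp only: binomial_absorption mult.assoc)
  also have "\<dots> = a * ((a - 1 + b) choose m')"
    by (simp add: sum_distrib_left[symmetric] vandermonde)
  finally show ?thesis using assms by (simp add: m)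
qed

text \<open>A Markov-type bound on the upper tail of the hypergeometric distribution.\<close>
lemma vandermonde_tail_le:
  assumes "1 \<le> m" "1 \<le> a"
  shows "Suc K * (\<Sum>j\<in>{K<..m}. (a choose j) * (b choose (m - j))) \<le> a * ((a + b - 1) choose (m - 1))"
proof -
  have "Suc K * (\<Sum>j\<in>{K<..m}. (a choose j) * (b choose (m - j)))
      \<le> (\<Sum>j\<in>{K<..m}. j * ((a choose j) * (b choose (m - j))))"
    unfolding sum_distrib_left by (intro sum_mono mult_right_mono) auto
  also have "\<dots> \<le> (\<Sum>j\<le>m. j * ((a choose j) * (b choose (m - j))))"
    by (rule sum_mono2) auto
  also have "\<dots> = a * ((a + b - 1) choose (m - 1))"
    by (rule vandermonde_mult_index[OF assms])
  finally show ?thesis .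
qed

lemma vandermonde_head_ge_half:
  assumes "1 \<le> m" "1 \<le> a" and small: "2 * a * m \<le> Suc K * (a + b)"
  shows "(a + b) choose m \<le> 2 * (\<Sum>j | j \<le> m \<and> j \<le> K. (a choose j) * (b choose (m - j)))"
proof -
  define f where "f j = (a choose j) * (b choose (m - j))" for j
  define H where "H = (\<Sum>j | j \<le> m \<and> j \<le> K. f j)"
  define T where "T = (\<Sum>j\<in>{K<..m}. f j)"
  define C where "C = (a + b) choose m"
  have "C = (\<Sum>j\<le>m. f j)" by (simp add: C_def f_def vandermonde)
  also have "{..m} = {j. j \<le> m \<and> j \<le> K} \<union> {K<..m}" by auto
  finally have C: "C = H + T" by (subst (asm) sum.union_disjoint) (auto simp: H_def T_def)
  have "Suc K * (a + b) * T = (a + b) * (Suc K * T)" by (simp only: ac_simps)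
  also have "\<dots> \<le> (a + b) * (a * ((a + b - 1) choose (m - 1)))"
    using vandermonde_tail_le[OF assms(1,2)] by (simp add: T_def f_def)
  also have "\<dots> = a * m * C"
    using binomial_absorption[of "m - 1" "a + b"] assms(1) by (simp add: C_def)
  finally have "2 * (Suc K * (a + b) * T) \<le> 2 * a * m * C" by simp
  also have "\<dots> \<le> Suc K * (a + b) * C"
    using small by (rule mult_le_mono1)
  finally have "Suc K * (a + b) * (2 * T) \<le> Suc K * (a + b) * C" by (simp add: algebra_simps)
  then have "2 * T \<le> C" using assms(2) by simp
  with C show ?thesis unfolding C_def H_def f_def by linarith
qed

lemma binomial_Suc_ge:
  assumes "real (Suc a) \<le> B"
  shows "(1 + real m / B) * real (a choose m) \<le> real (Suc a choose m)"
proof (cases "m \<le> a")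
  case False
  then show ?thesis by (simp add: binomial_eq_0)
next
  case True
  define S where "S = real (Suc a)"
  have pos: "0 < S" by (simp add: S_def)
  have absorb: "S * real (a choose m) = real (Suc a - m) * real (Suc a choose m)"
    using binomial_absorb_comp[of "Suc a" m] unfolding S_def by (metis diff_Suc_1 of_nat_mult)
  have "(1 + real m / B) * real (a choose m) \<le> (1 + real m / S) * real (a choose m)"
    using assms by (auto simp: S_def intro!: mult_right_mono add_left_mono divide_left_mono)
  also have "\<dots> = (S + m) * (S * real (a choose m)) / (S * S)"
    using pos by (simp add: field_simps)
  also have "\<dots> = (S + m) * real (Suc a - m) * real (Suc a choose m) / (S * S)"
    by (simp only: absorb mult.assoc)
  also have "\<dots> \<le> real (Suc a choose m)"
  proof -
    have "(S + m) * real (Suc a - m) \<le> S * S"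
      using True by (simp add: S_def of_nat_diff algebra_simps)
    then have "(S + m) * real (Suc a - m) * real (Suc a choose m) \<le> S * S * real (Suc a choose m)"
      by (rule mult_right_mono) simp
    then show ?thesis
      using pos by (simp add: divide_le_eq mult.commute)
  qed
  finally show ?thesis .
qed

lemma binomial_add_ge_power:
  assumes "real (N + s) \<le> B" "0 < B"
  shows "(1 + real m / B) ^ s * real (N choose m) \<le> real ((N + s) choose m)"
  using assms(1)
proof (induction s)
  case 0
  then show ?case by simp
next
  case (Suc s)
  have "(1 + real m / B) ^ Suc s * real (N choose m)
      = (1 + real m / B) * ((1 + real m / B) ^ s * real (N choose m))" by simp
  also have "\<dots> \<le> (1 + real m / B) * real ((N + s) choose m)"
    using Suc assms(2) by (intro mult_left_mono) auto
  also have "\<dots> \<le> real (Suc (N + s) choose m)"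
    using Suc.prems by (intro binomial_Suc_ge) simp
  finally show ?case by simp
qed

lemma exp_le_one_plus_power:
  assumes "0 \<le> x" "x \<le> 1/2"
  shows "exp (real s * x / 2) \<le> (1 + x) ^ s"
proof -
  have "x / 2 \<le> x - x^2"
    using assms mult_left_mono[of x "1/2" x] by (simp add: power2_eq_square)
  also have "\<dots> \<le> ln (1 + x)"
    using assms by (intro ln_one_plus_pos_lower_bound) auto
  finally have "exp (real s * (x / 2)) \<le> exp (real s * ln (1 + x))"
    by (intro exp_le_cancel_iff[THEN iffD2] mult_left_mono) auto
  also have "\<dots> = (1 + x) ^ s"
    using assms by (simp add: exp_of_nat_mult)
  finally show ?thesis by simp
qed

lemma exp_mult_binomial_le:
  assumes "s \<le> N" "m \<le> N" "0 < N"
  shows "exp (real s * real m / (4 * real N)) * real (N choose m) \<le> real ((N + s) choose m)"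
proof -
  have "exp (real s * real m / (4 * real N)) \<le> (1 + real m / (2 * real N)) ^ s"
    using exp_le_one_plus_power[of "real m / (2 * real N)" s] assms by simp
  then have "exp (real s * real m / (4 * real N)) * real (N choose m)
      \<le> (1 + real m / (2 * real N)) ^ s * real (N choose m)"
    by (rule mult_right_mono) simp
  also have "\<dots> \<le> real ((N + s) choose m)"
    using assms by (intro binomial_add_ge_power) auto
  finally show ?thesis .
qed

lemma two_powr_le_exp: "0 \<le> y \<Longrightarrow> 2 powr y \<le> exp (y::real)"
  using ln_2_less_1 by (simp add: powr_def mult_left_le)

lemma two_powr_binomial_le_card_small:
  assumes "1 \<le> m" "m \<le> N" "N < 576 * m"
  shows "2 powr (real N / (2^21 * real m)) * real (N choose m)
    \<le> real (card (sum_free_subsets (2*N) m))"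
proof -
  define y where "y = real N / (2^21 * real m)"
  have "0 < real m" "0 < real N" and mN: "real N < 576 * real m"
    using assms by auto
  then have y: "0 \<le> y" "y \<le> 1/2"
    by (auto simp: y_def field_simps)
  have "real N * real N < 576 * real m * (576 * real m)"
    using mN \<open>0 < real N\<close> by (intro mult_strict_mono) auto
  then have "real N * real N < 331776 * (real m * real m)" by simp
  moreover have "0 \<le> real m * real m" by simp
  ultimately have "2 * (real N * real N) \<le> 2097152 * (real m * real m)" by linarith
  then have small: "2 * y \<le> real m / real N"
    using \<open>0 < real m\<close> \<open>0 < real N\<close> by (simp add: y_def field_simps)
  have "2 powr y \<le> exp y" using y(1) by (rule two_powr_le_exp)
  also have "\<dots> \<le> 1 + 2 * y"
    using exp_bound_lemma[of y] y by simp
  also have "\<dots> \<le> 1 + real m / real N" using small by simp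
  finally have "2 powr y * real (N choose m) \<le> (1 + real m / real N) * real (N choose m)"
    by (rule mult_right_mono) simp
  also have "\<dots> = real (N choose m) + real m / real N * real (N choose m)"
    by (simp add: distrib_right)
  also have "real m * real (N choose m) = real N * real ((N - 1) choose (m - 1))"
    using binomial_absorption[of "m - 1" N] assms(1) by (simp flip: of_nat_mult)
  then have "real m / real N * real (N choose m) = real ((N - 1) choose (m - 1))"
    using \<open>0 < real N\<close> by (simp add: field_simps)
  finally show ?thesis
    using binomial_add_le_card_sum_free_subsets[of m N] assms by (simp add: y_def flip: of_nat_add)
qed

text \<open>The construction with \<open>t = 2*K*K\<close>: by Vandermonde's identity the sum it produces
  is a lower tail of \<open>(N + K*K) choose m\<close> that carries at least half of it.\<close>
lemma binomial_le_two_card_sum_free_subsets: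
  assumes lower: "8 * K * m \<le> N" and KK: "128 * K * K \<le> N" and "1 \<le> K" "1 \<le> m"
  shows "(N + K * K) choose m \<le> 2 * card (sum_free_subsets (2*N) m)"
proof -
  have "2 * (4*K*K) * m = K * (8 * K * m)" by simp
  also have "\<dots> \<le> Suc K * (4*K*K + (N - 3*K*K))"
    using KK lower by (intro mult_le_mono) auto
  finally have "(4*K*K + (N - 3*K*K)) choose m
      \<le> 2 * (\<Sum>j | j \<le> m \<and> j \<le> K. (4*K*K choose j) * ((N - 3*K*K) choose (m - j)))"
    using assms by (intro vandermonde_head_ge_half) auto
  also have "\<dots> \<le> 2 * card (sum_free_subsets (2*N) m)"
    using sum_binomial_le_card_sum_free_subsets[where t = "2*K*K" and N = N and m = m and K = K] KK
    by (simp add: algebra_simps)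
  finally show ?thesis using KK by (simp add: algebra_simps)
qed

text \<open>\<open>(N + K*K) choose m\<close> exceeds \<open>N choose m\<close> by the factor \<open>exp (K*K*m / (4*N)) \<ge> exp (K / 36)\<close>,
  and \<open>exp (K / 36) / 2\<close> beats \<open>2 powr (N / (2^21 * m))\<close> because \<open>N < 9*K*m\<close> and \<open>K \<ge> 72\<close>.\<close>
lemma two_powr_binomial_le_card_large:
  assumes K: "72 \<le> K" and lower: "8 * K * m \<le> N" and upper: "N < 8 * Suc K * m"
    and sqrt: "2 * N \<le> m * m"
  shows "2 powr (real N / (2^21 * real m)) * real (N choose m)
    \<le> real (card (sum_free_subsets (2*N) m))"
proof -
  have "1 \<le> m" using upper by (cases m) auto
  have "m \<le> 8 * K * m" using K by simp
  with lower \<open>1 \<le> m\<close> have "m \<le> N" "0 < N" by linarith+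
  have "N * (128 * K * K) = 64 * K * K * (2 * N)" by simp
  also have "\<dots> \<le> 64 * K * K * (m * m)" using sqrt by simp
  also have "\<dots> = (8 * K * m) * (8 * K * m)" by simp
  also have "\<dots> \<le> N * N" using lower lower by (rule mult_le_mono)
  finally have KK: "128 * K * K \<le> N" using \<open>0 < N\<close> by simp
  have "8 * m \<le> K * m" using K by (intro mult_le_mono1) simp
  moreover have "8 * Suc K * m = 8 * m + 8 * (K * m)" by (simp add: algebra_simps)
  ultimately have "N \<le> 9 * (K * m)" using upper by linarith
  then have "real N \<le> real (9 * (K * m))" by (simp only: of_nat_le_iff)
  then have N9: "real N \<le> 9 * (real K * real m)" by simp
  have "exp (real K / 36) \<le> exp (real (K * K) * real m / (4 * real N))"
  proof -
    from N9 have "real K * real N \<le> real K * (9 * (real K * real m))" by (rule mult_left_mono) simp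
    then show ?thesis using \<open>0 < N\<close> \<open>1 \<le> m\<close> by (simp add: field_simps)
  qed
  then have "exp (real K / 36) * real (N choose m)
      \<le> exp (real (K * K) * real m / (4 * real N)) * real (N choose m)"
    by (rule mult_right_mono) simp
  also have "\<dots> \<le> real ((N + K * K) choose m)"
    using KK \<open>m \<le> N\<close> \<open>0 < N\<close> by (intro exp_mult_binomial_le) auto
  also have "\<dots> \<le> 2 * real (card (sum_free_subsets (2*N) m))"
    using binomial_le_two_card_sum_free_subsets[OF lower KK] K \<open>1 \<le> m\<close>
    by (simp flip: of_nat_mult)
  finally have exp_le: "exp (real K / 36) * real (N choose m) \<le> 2 * real (card (sum_free_subsets (2*N) m))" .
  define y where "y = real N / (2^21 * real m)"
  have "72 * real N \<le> 2^21 * (real K * real m)"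
    using N9 by simp
  then have "y \<le> real K / 72" "0 \<le> y"
    using \<open>1 \<le> m\<close> by (simp_all add: y_def field_simps)
  then have "2 powr y \<le> exp (real K / 72)"
    using two_powr_le_exp[of y] by (meson exp_le_cancel_iff order_trans)
  moreover have "2 \<le> exp (real K / 72)"
    using exp_ge_add_one_self[of "real K / 72"] K by linarith
  ultimately have "2 * 2 powr y \<le> exp (real K / 72) * exp (real K / 72)"
    by (intro mult_mono) auto
  then have "2 * 2 powr y \<le> exp (real K / 36)" by (simp flip: exp_add)
  then have "2 * (2 powr y * real (N choose m)) \<le> exp (real K / 36) * real (N choose m)"
    by (simp add: mult_right_mono flip: mult.assoc)
  with exp_le show ?thesis unfolding y_def by linarith
qed

lemma two_powr_binomial_le_card_sum_free_subsets:
  assumes sqrt: "2 * N \<le> m * m"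
  shows "2 powr (real N / (2^21 * real m)) * real (N choose m)
    \<le> real (card (sum_free_subsets (2*N) m))"
proof -
  consider "m = 0" | "N < m" | "1 \<le> m" "m \<le> N" by linarith
  then show ?thesis
  proof cases
    case 1
    \<comment> \<open>the exponent \<open>N / 0\<close> is \<open>0\<close>\<close>
    then show ?thesis using binomial_le_card_sum_free_subsets[of N 0] by simp
  next
    case 2
    then show ?thesis by (simp add: binomial_eq_0)
  next
    case 3
    define K where "K = N div (8 * m)"
    have "K * (8 * m) \<le> N"
      unfolding K_def by (rule div_times_less_eq_dividend)
    then have lower: "8 * K * m \<le> N" by (simp add: algebra_simps)
    have "N = K * (8 * m) + N mod (8 * m)"
      unfolding K_def by (rule div_mult_mod_eq[symmetric])
    moreover have "N mod (8 * m) < 8 * m" using 3 by simp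
    moreover have "8 * Suc K * m = K * (8 * m) + 8 * m" by (simp add: algebra_simps)
    ultimately have upper: "N < 8 * Suc K * m" by linarith
    show ?thesis
    proof (cases "K < 72")
      case True
      then have "8 * Suc K * m \<le> 576 * m" by simp
      with upper have "N < 576 * m" by linarith
      with 3 show ?thesis by (intro two_powr_binomial_le_card_small)
    next
      case False
      with lower upper sqrt show ?thesis by (intro two_powr_binomial_le_card_large) auto
    qed
  qed
qed

theorem proposition3p1:
  shows "\<exists>c::real. c > 0 \<and> (\<forall>n m :: nat. even n \<longrightarrow> real m \<ge> sqrt (real n) \<longrightarrow>
     real (card {A. A \<subseteq> {1..n} \<and> card A = m \<and> sum_free A})
       \<ge> 2 powr (c * real n / real m) * real ((n div 2) choose m))"
proof (intro exI[of _ "1/2^22"] conjI allI impI)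
  fix n m :: nat
  assume "even n" and sqrt: "sqrt (real n) \<le> real m"
  then obtain N where n: "n = 2 * N" by (elim evenE)
  have "real n \<le> real m ^ 2"
    using sqrt by (rule sqrt_le_D)
  then have "2 * N \<le> m * m"
    by (simp add: n power2_eq_square flip: of_nat_mult)
  then show "2 powr (1/2^22 * real n / real m) * real ((n div 2) choose m)
      \<le> real (card {A. A \<subseteq> {1..n} \<and> card A = m \<and> sum_free A})"
    using two_powr_binomial_le_card_sum_free_subsets[of N m]
    by (simp add: n sum_free_subsets_def)
qed simp

end
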